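(* Let $Q$ and $H$ be countable groups and let $(S_i)_{i\in\mathbb{N}}$ with $S_i\subseteq Q$ and $(T_i)_{i\in\mathbb{N}}$ with $T_i\subseteq H$ be ascending sequences of finite sets such that $Q$ is generated by $\bigcup_i S_i$ and $H$ is generated by $\bigcup_i T_i$. Assume there is a map $r\colon H\to Q$ such that for every $i$: (1) if $d_{T_i}(x,y)<\infty$ then $d_{S_i}(r(x),r(y))<\infty$; and (2) every element of $Q$ has finite $d_{S_i}$-distance to $r(H)$. If $H$ is finitely generated, then so is $Q$.
   Context: For a subset $S$ of a group, $d_S$ denotes the word metric with respect to $S$, i.e. the path metric of the Cayley graph with respect to $S$, taking the value $\infty$ for two elements not connected by a path in that graph. *)

theory Defs
  imports "HOL-Algebra.Algebra" "HOL-Library.Extended_Nat"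
begin

text \<open>Word metric d_S on a group G: the path metric of the Cayley graph of G with
  respect to S (edges x -- x s for s in S), i.e. the least length of a word in
  S and inverses of S leading from x to y; it is infinity if no such word exists
  (Inf of the empty set of enat is infinity).\<close>
definition word_dist :: "('a, 'b) monoid_scheme \<Rightarrow> 'a set \<Rightarrow> 'a \<Rightarrow> 'a \<Rightarrow> enat" where
  "word_dist G S x y =
     (INF ws \<in> {ws. set ws \<subseteq> S \<union> (\<lambda>s. inv\<^bsub>G\<^esub> s) ` S \<and> foldl (\<lambda>a b. a \<otimes>\<^bsub>G\<^esub> b) x ws = y}.
        enat (length ws))"

definition fin_gen_group :: "('a, 'b) monoid_scheme \<Rightarrow> bool" where
  "fin_gen_group G \<longleftrightarrow> (\<exists>A. finite A \<and> A \<subseteq> carrier G \<and> generate G A = carrier G)"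

end

theory Submission
  imports Defs
begin

text \<open>Two points are at finite word distance with respect to \<open>S\<close> exactly when they lie in the same
  left coset of the subgroup generated by \<open>S\<close>. Since \<open>H\<close> is finitely generated, a single \<open>T n\<close>
  already generates \<open>H\<close>, so all of \<open>H\<close> is at finite \<open>T n\<close>-distance from \<open>\<one>\<close>; hence \<open>r(H)\<close> is at
  finite \<open>S n\<close>-distance from \<open>r \<one>\<close>, and so is all of \<open>Q\<close>. Thus \<open>Q\<close> is the single coset
  \<open>r \<one> \<langle>S n\<rangle>\<close> and is generated by the finite set \<open>insert (r \<one>) (S n)\<close>.\<close>

lemma word_dist_finite_iff:
  "word_dist G S x y < \<infinity> \<longleftrightarrow>
   (\<exists>ws. set ws \<subseteq> S \<union> (\<lambda>s. inv\<^bsub>G\<^esub> s) ` S \<and> foldl (\<lambda>a b. a \<otimes>\<^bsub>G\<^esub> b) x ws = y)"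
  (is "_ \<longleftrightarrow> (\<exists>ws. ?word ws)")
proof
  assume "word_dist G S x y < \<infinity>"
  moreover have "word_dist G S x y = \<infinity>" if "{ws. ?word ws} = {}"
    unfolding word_dist_def that by (simp add: top_enat_def)
  ultimately show "\<exists>ws. ?word ws" by force
next
  assume "\<exists>ws. ?word ws"
  then obtain ws where "?word ws" by blast
  then have "word_dist G S x y \<le> enat (length ws)"
    unfolding word_dist_def by (intro INF_lower) simp
  then show "word_dist G S x y < \<infinity>"
    using enat_ord_simps(4) le_less_trans by blast
qed

context group
begin

lemma foldl_mult_closed:
  "x \<in> carrier G \<Longrightarrow> set ws \<subseteq> carrier G \<Longrightarrow> foldl (\<lambda>a b. a \<otimes> b) x ws \<in> carrier G"
  by (induction ws arbitrary: x) auto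

lemma foldl_mult_left:
  assumes "x \<in> carrier G" "set ws \<subseteq> carrier G"
  shows "foldl (\<lambda>a b. a \<otimes> b) x ws = x \<otimes> foldl (\<lambda>a b. a \<otimes> b) \<one> ws"
  using assms
proof (induction ws arbitrary: x)
  case Nil
  then show ?case by simp
next
  case (Cons b ws)
  then have "b \<in> carrier G" "set ws \<subseteq> carrier G" by auto
  with Cons.prems(1) Cons.IH[of "x \<otimes> b"] Cons.IH[of b] show ?case
    by (simp add: m_assoc foldl_mult_closed)
qed

lemma word_in_generate:
  assumes "S \<subseteq> carrier G" "set ws \<subseteq> S \<union> (\<lambda>s. inv s) ` S"
  shows "foldl (\<lambda>a b. a \<otimes> b) \<one> ws \<in> generate G S"
  using assms(2)
proof (induction ws rule: rev_induct)
  case Nil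
  then show ?case by (simp add: generate.one)
next
  case (snoc b ws)
  then have "b \<in> generate G S" by (auto intro: generate.incl generate.inv)
  with snoc show ?case by (auto intro: generate.eng)
qed

lemma generate_word_exists:
  assumes "S \<subseteq> carrier G" "g \<in> generate G S"
  shows "\<exists>ws. set ws \<subseteq> S \<union> (\<lambda>s. inv s) ` S \<and> foldl (\<lambda>a b. a \<otimes> b) \<one> ws = g"
  using assms(2)
proof (induction rule: generate.induct)
  case one
  show ?case by (intro exI[of _ "[]"]) simp
next
  case (incl h)
  then have "h \<in> carrier G" using assms(1) by blast
  with incl show ?case by (intro exI[of _ "[h]"]) simp
next
  case (inv h)
  then have "h \<in> carrier G" using assms(1) by blast
  with inv show ?case by (intro exI[of _ "[inv h]"]) simp
next
  case (eng h1 h2)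
  then obtain w1 w2 where w:
    "set w1 \<subseteq> S \<union> (\<lambda>s. inv s) ` S" "foldl (\<lambda>a b. a \<otimes> b) \<one> w1 = h1"
    "set w2 \<subseteq> S \<union> (\<lambda>s. inv s) ` S" "foldl (\<lambda>a b. a \<otimes> b) \<one> w2 = h2"
    by blast
  have "set w2 \<subseteq> carrier G" using w(3) assms(1) by auto
  moreover have "h1 \<in> carrier G" using eng.hyps(1) assms(1) generate_in_carrier by blast
  ultimately have "foldl (\<lambda>a b. a \<otimes> b) \<one> (w1 @ w2) = h1 \<otimes> h2"
    using foldl_mult_left[of h1 w2] w by simp
  with w show ?case by (intro exI[of _ "w1 @ w2"]) simp
qed

lemma word_dist_finite_iff_generate:
  assumes "S \<subseteq> carrier G" "x \<in> carrier G" "y \<in> carrier G"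
  shows "word_dist G S x y < \<infinity> \<longleftrightarrow> inv x \<otimes> y \<in> generate G S"
proof
  assume "word_dist G S x y < \<infinity>"
  then obtain ws where ws: "set ws \<subseteq> S \<union> (\<lambda>s. inv s) ` S" "foldl (\<lambda>a b. a \<otimes> b) x ws = y"
    unfolding word_dist_finite_iff by blast
  have "set ws \<subseteq> carrier G" using ws(1) assms(1) by auto
  then have "y = x \<otimes> foldl (\<lambda>a b. a \<otimes> b) \<one> ws" "foldl (\<lambda>a b. a \<otimes> b) \<one> ws \<in> carrier G"
    using foldl_mult_left[OF assms(2)] foldl_mult_closed ws(2) by auto
  then have "inv x \<otimes> y = foldl (\<lambda>a b. a \<otimes> b) \<one> ws"
    using assms(2) by (simp add: m_assoc[symmetric])
  then show "inv x \<otimes> y \<in> generate G S"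
    using word_in_generate[OF assms(1) ws(1)] by simp
next
  assume "inv x \<otimes> y \<in> generate G S"
  then obtain ws where ws: "set ws \<subseteq> S \<union> (\<lambda>s. inv s) ` S" "foldl (\<lambda>a b. a \<otimes> b) \<one> ws = inv x \<otimes> y"
    using generate_word_exists[OF assms(1)] by blast
  have "set ws \<subseteq> carrier G" using ws(1) assms(1) by auto
  then have "foldl (\<lambda>a b. a \<otimes> b) x ws = y"
    using foldl_mult_left[OF assms(2)] ws(2) assms(2,3) by (simp add: m_assoc[symmetric])
  with ws(1) show "word_dist G S x y < \<infinity>"
    unfolding word_dist_finite_iff by blast
qed

lemma word_dist_finite_common_target:
  assumes S: "S \<subseteq> carrier G" and xyz: "x \<in> carrier G" "y \<in> carrier G" "z \<in> carrier G"
    and "word_dist G S x z < \<infinity>" "word_dist G S y z < \<infinity>"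
  shows "word_dist G S x y < \<infinity>"
proof -
  have xz: "inv x \<otimes> z \<in> generate G S"
    using assms(5) word_dist_finite_iff_generate[OF S xyz(1,3)] by simp
  have "inv y \<otimes> z \<in> generate G S"
    using assms(6) word_dist_finite_iff_generate[OF S xyz(2,3)] by simp
  then have "inv (inv y \<otimes> z) \<in> generate G S"
    by (rule generate_m_inv_closed[OF S])
  with xz have "(inv x \<otimes> z) \<otimes> inv (inv y \<otimes> z) \<in> generate G S"
    by (rule generate.eng)
  moreover have "(inv x \<otimes> z) \<otimes> inv (inv y \<otimes> z) = inv x \<otimes> y"
    using xyz by (simp add: inv_mult_group m_assoc) (simp add: m_assoc[symmetric])
  ultimately show ?thesis
    using word_dist_finite_iff_generate[OF S xyz(1,2)] by simp
qed

lemma generate_Union_chain: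
  assumes "\<And>i. T i \<subseteq> T (Suc i)" "g \<in> generate G (\<Union>i. T i)"
  shows "\<exists>n. g \<in> generate G (T n)"
  using assms(2)
proof (induction rule: generate.induct)
  case (eng h1 h2)
  then obtain n1 n2 where "h1 \<in> generate G (T n1)" "h2 \<in> generate G (T n2)" by blast
  moreover have "T k \<subseteq> T (max n1 n2)" if "k \<le> max n1 n2" for k
    using lift_Suc_mono_le[of T, OF assms(1) that] .
  ultimately have "h1 \<in> generate G (T (max n1 n2))" "h2 \<in> generate G (T (max n1 n2))"
    using mono_generate by (meson max.cobounded1 max.cobounded2 subsetD)+
  then show ?case by (blast intro: generate.eng)
qed (auto intro: generate.intros)

lemma fin_gen_group_generated_by_chain_member:
  assumes "fin_gen_group G" "\<And>i. T i \<subseteq> carrier G" "\<And>i. T i \<subseteq> T (Suc i)"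
    and "generate G (\<Union>i. T i) = carrier G"
  shows "\<exists>n. generate G (T n) = carrier G"
proof -
  obtain A where A: "finite A" "A \<subseteq> carrier G" "generate G A = carrier G"
    using assms(1) unfolding fin_gen_group_def by blast
  have "\<exists>n. a \<in> generate G (T n)" if "a \<in> A" for a
    using generate_Union_chain[of T a, OF assms(3)] A(2) assms(4) that by blast
  then obtain f where f: "\<And>a. a \<in> A \<Longrightarrow> a \<in> generate G (T (f a))"
    by metis
  define n where "n = Max (insert 0 (f ` A))"
  have "T (f a) \<subseteq> T n" if "a \<in> A" for a
    using lift_Suc_mono_le[of T, OF assms(3)] A(1) that unfolding n_def by simp
  then have "A \<subseteq> generate G (T n)"
    using f mono_generate by blast
  then have "carrier G \<subseteq> generate G (T n)"
    using A(3) generate_subgroup_incl generate_is_subgroup[OF assms(2)] by metis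
  then show ?thesis
    using generate_incl[OF assms(2)] by blast
qed

lemma fin_gen_group_if_word_dist_finite:
  assumes S: "finite S" "S \<subseteq> carrier G" and p: "p \<in> carrier G"
    and dist: "\<And>q. q \<in> carrier G \<Longrightarrow> word_dist G S q p < \<infinity>"
  shows "fin_gen_group G"
proof -
  let ?B = "insert p S"
  have B: "?B \<subseteq> carrier G" using S(2) p by blast
  have "q \<in> generate G ?B" if q: "q \<in> carrier G" for q
  proof -
    have "inv q \<otimes> p \<in> generate G S"
      using word_dist_finite_iff_generate[OF S(2) q p] dist[OF q] by simp
    then have "inv q \<otimes> p \<in> generate G ?B"
      using mono_generate[of S ?B] by blast
    then have "inv (inv q \<otimes> p) \<in> generate G ?B"
      by (rule generate_m_inv_closed[OF B])
    with generate.incl[of p ?B] have "p \<otimes> inv (inv q \<otimes> p) \<in> generate G ?B"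
      by (blast intro: generate.eng)
    moreover have "p \<otimes> inv (inv q \<otimes> p) = q"
      using p q by (simp add: inv_mult_group m_assoc[symmetric])
    ultimately show ?thesis by simp
  qed
  then have "generate G ?B = carrier G"
    using generate_incl[OF B] by blast
  with S B show ?thesis
    unfolding fin_gen_group_def by blast
qed

end

theorem lemma5p6:
  fixes Q :: "('a, 'c) monoid_scheme" and H :: "('b, 'd) monoid_scheme"
    and S :: "nat \<Rightarrow> 'a set" and T :: "nat \<Rightarrow> 'b set" and r :: "'b \<Rightarrow> 'a"
  assumes "group Q" and "group H"
    and "countable (carrier Q)" and "countable (carrier H)"
    and "\<And>i. finite (S i)" and "\<And>i. S i \<subseteq> carrier Q" and "\<And>i. S i \<subseteq> S (Suc i)"
    and "\<And>i. finite (T i)" and "\<And>i. T i \<subseteq> carrier H" and "\<And>i. T i \<subseteq> T (Suc i)"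
    and "generate Q (\<Union>i. S i) = carrier Q"
    and "generate H (\<Union>i. T i) = carrier H"
    and "r \<in> carrier H \<rightarrow> carrier Q"
    and "\<And>i x y. x \<in> carrier H \<Longrightarrow> y \<in> carrier H \<Longrightarrow> word_dist H (T i) x y < \<infinity>
           \<Longrightarrow> word_dist Q (S i) (r x) (r y) < \<infinity>"
    and "\<And>i q. q \<in> carrier Q \<Longrightarrow> \<exists>h \<in> carrier H. word_dist Q (S i) q (r h) < \<infinity>"
    and "fin_gen_group H"
  shows "fin_gen_group Q"
proof -
  interpret Q: group Q by fact
  interpret H: group H by fact
  obtain n where n: "generate H (T n) = carrier H"
    using H.fin_gen_group_generated_by_chain_member[OF assms(16,9,10,12)] by blast
  have r_one: "r \<one>\<^bsub>H\<^esub> \<in> carrier Q"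
    using assms(13) by auto
  show ?thesis
  proof (rule Q.fin_gen_group_if_word_dist_finite[OF assms(5,6) r_one])
    fix q assume q: "q \<in> carrier Q"
    then obtain h where h: "h \<in> carrier H" "word_dist Q (S n) q (r h) < \<infinity>"
      using assms(15) by blast
    have "word_dist H (T n) \<one>\<^bsub>H\<^esub> h < \<infinity>"
      using H.word_dist_finite_iff_generate[OF assms(9) H.one_closed h(1)] h(1) n by simp
    then have "word_dist Q (S n) (r \<one>\<^bsub>H\<^esub>) (r h) < \<infinity>"
      by (rule assms(14)[OF H.one_closed h(1)])
    moreover have "r h \<in> carrier Q"
      using assms(13) h(1) by auto
    ultimately show "word_dist Q (S n) q (r \<one>\<^bsub>H\<^esub>) < \<infinity>"
      using Q.word_dist_finite_common_target[OF assms(6) q r_one] h(2) by blast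
  qed
qed

end
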